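(* Let $W=\langle s,t: s^2=t^2=(st)^m=1\rangle$ be a Coxeter group of rank $2$ with $m\ge2$ the order of $st$. Then the element $a_sa_t$ generates the top (degree $2$) component of the Orlik–Solomon algebra $A(W)$ as a right $\mathbb CW$-module.
   Context: $W$ acts as a reflection group on $\mathbb C^2$; $T$ is its set of reflections and $H_t$ the reflecting hyperplane of $t\in T$. $A(W)$ is the $\mathbb C$-algebra generated by $a_t$ ($t\in T$) subject to $a_ta_{t'}=-a_{t'}a_t$ and $\sum_{i=1}^p(-1)^ia_{t_1}\cdots\widehat{a_{t_i}}\cdots a_{t_p}=0$ whenever $\{H_{t_1},\dots,H_{t_p}\}$ is linearly dependent; $W$ acts by $a_t.w=a_{w^{-1}tw}$ extended to algebra automorphisms. The degree $2$ component is spanned by products $a_{t}a_{t'}$ with $H_t\ne H_{t'}$. *)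

theory Defs
  imports "HOL-Analysis.Analysis"
begin

type_synonym cmat = "complex^2^2"
type_synonym cvec = "complex^2"

text \<open>Geometric realisation of the rank-2 Coxeter group I_2(m) acting on C^2:
  s = reflection in the line at angle 0, t = reflection in the line at angle pi/m.\<close>

definition refl_s :: cmat where
  "refl_s = (\<chi> i j. if i = j then (if i = 1 then 1 else -1) else 0)"

definition refl_t :: "nat \<Rightarrow> cmat" where
  "refl_t m = (\<chi> i j. if i = 1 \<and> j = 1 then complex_of_real (cos (2 * pi / real m))
      else if i = 2 \<and> j = 2 then - complex_of_real (cos (2 * pi / real m))
      else complex_of_real (sin (2 * pi / real m)))"

text \<open>The group W generated by s and t (both are involutions, so the
  generated monoid is the generated group).\<close>
inductive_set coxW :: "nat \<Rightarrow> cmat set" for m :: nat where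
  one: "mat 1 \<in> coxW m"
| S: "w \<in> coxW m \<Longrightarrow> refl_s ** w \<in> coxW m"
| T: "w \<in> coxW m \<Longrightarrow> refl_t m ** w \<in> coxW m"

definition form_ker :: "cvec \<Rightarrow> cvec set" where
  "form_ker a = {v. (\<Sum>j\<in>UNIV. a $ j * v $ j) = 0}"

definition fixspace :: "cmat \<Rightarrow> cvec set" where
  "fixspace g = {v. g *v v = v}"

definition is_reflection :: "cmat \<Rightarrow> bool" where
  "is_reflection g \<longleftrightarrow> (\<exists>a. a \<noteq> 0 \<and> fixspace g = form_ker a)"

definition reflections :: "nat \<Rightarrow> cmat set" where
  "reflections m = {g \<in> coxW m. is_reflection g}"

definition hyps_dependent :: "cvec set list \<Rightarrow> bool" where
  "hyps_dependent Hs \<longleftrightarrow> (\<exists>a c.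
      (\<forall>i<length Hs. a i \<noteq> 0 \<and> Hs ! i = form_ker (a i)) \<and>
      (\<exists>i<length Hs. c i \<noteq> 0) \<and> (\<Sum>i<length Hs. c i *s a i) = 0)"

text \<open>Free associative algebra on the symbols a_t: elements are coefficient
  functions on words (lists of reflections).\<close>
definition wd :: "cmat list \<Rightarrow> cmat list \<Rightarrow> complex" where
  "wd u = (\<lambda>x. if x = u then 1 else 0)"

text \<open>Two-sided multiplication u * f * v by words u, v.\<close>
definition wmul :: "cmat list \<Rightarrow> (cmat list \<Rightarrow> complex) \<Rightarrow> cmat list \<Rightarrow> cmat list \<Rightarrow> complex" where
  "wmul u f v = (\<lambda>x. if length u + length v \<le> length x \<and> take (length u) x = u
      \<and> drop (length x - length v) x = v
      then f (take (length x - length u - length v) (drop (length u) x)) else 0)"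

definition os_rel :: "cmat list \<Rightarrow> cmat list \<Rightarrow> complex" where
  "os_rel ts = (\<lambda>x. \<Sum>i<length ts. (-1) ^ (i + 1) * wd (take i ts @ drop (Suc i) ts) x)"

definition cspan :: "(cmat list \<Rightarrow> complex) set \<Rightarrow> (cmat list \<Rightarrow> complex) set" where
  "cspan S = {f. \<exists>F c. finite F \<and> F \<subseteq> S \<and> f = (\<lambda>x. \<Sum>g\<in>F. c g * g x)}"

definition OS_gens :: "nat \<Rightarrow> (cmat list \<Rightarrow> complex) set" where
  "OS_gens m =
     {(\<lambda>x. wd [t, t'] x + wd [t', t] x) | t t'. t \<in> reflections m \<and> t' \<in> reflections m}
   \<union> {os_rel ts | ts. set ts \<subseteq> reflections m \<and> hyps_dependent (map fixspace ts)}"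

text \<open>The two-sided ideal of the free algebra generated by the OS relations;
  A(W) is the free algebra modulo this ideal.\<close>
definition OS_ideal :: "nat \<Rightarrow> (cmat list \<Rightarrow> complex) set" where
  "OS_ideal m = cspan {wmul u r v | u r v. u \<in> lists (reflections m) \<and>
      v \<in> lists (reflections m) \<and> r \<in> OS_gens m}"

end

theory Submission
  imports Defs
begin

text \<open>Put \<open>\<theta> = 2\<pi>/m\<close>. The group \<open>W\<close> consists of the rotations by multiples of \<open>\<theta>\<close>
  and of the reflections \<open>r\<^sub>k\<close> in the lines at angle \<open>k\<theta>/2\<close>, and only the latter are
  reflections. Call a pair \<open>(u, v)\<close> of reflections good if \<open>a\<^sub>u a\<^sub>v\<close> lies in the span \<open>M\<close> of the
  Orlik--Solomon ideal and of the products \<open>a\<^sub>s\<^sub>' a\<^sub>t\<^sub>'\<close> with \<open>(s', t')\<close> conjugate to \<open>(s, t)\<close>.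
  Each pair \<open>(r\<^sub>k, r\<^sub>k\<^sub>+\<^sub>1)\<close> is, in one of its two orders, conjugate to \<open>(s, t)\<close>. Modulo
  the ideal \<open>a\<^sub>u a\<^sub>v = - a\<^sub>v a\<^sub>u\<close>, so goodness is symmetric; and since any three lines in
  \<open>\<complex>\<^sup>2\<close> are dependent, \<open>a\<^sub>u a\<^sub>w = a\<^sub>u a\<^sub>v + a\<^sub>v a\<^sub>w\<close> modulo the ideal, so goodness is
  transitive. Hence all pairs are good.\<close>

text \<open>\<open>rot2 a\<close> is the rotation by \<open>a\<close>, \<open>refl2 a\<close> the reflection in the line at angle \<open>a/2\<close>.\<close>

definition rot2 :: "real \<Rightarrow> cmat" where
  "rot2 a = (\<chi> i j. if i = j then complex_of_real (cos a)
      else if i = 1 then - complex_of_real (sin a) else complex_of_real (sin a))"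

definition refl2 :: "real \<Rightarrow> cmat" where
  "refl2 a = (\<chi> i j. if i = 1 \<and> j = 1 then complex_of_real (cos a)
      else if i = 2 \<and> j = 2 then - complex_of_real (cos a) else complex_of_real (sin a))"

lemma refl2_mult_refl2: "refl2 a ** refl2 b = rot2 (a - b)"
  by (simp add: refl2_def rot2_def vec_eq_iff forall_2 matrix_matrix_mult_def sum_2 cos_diff sin_diff)

lemma refl2_mult_rot2: "refl2 a ** rot2 b = refl2 (a - b)"
  by (simp add: refl2_def rot2_def vec_eq_iff forall_2 matrix_matrix_mult_def sum_2 cos_diff sin_diff)

lemma rot2_mult_refl2: "rot2 a ** refl2 b = refl2 (a + b)"
  by (simp add: refl2_def rot2_def vec_eq_iff forall_2 matrix_matrix_mult_def sum_2 cos_add sin_add)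

lemma rot2_mult_rot2: "rot2 a ** rot2 b = rot2 (a + b)"
  by (simp add: rot2_def vec_eq_iff forall_2 matrix_matrix_mult_def sum_2 cos_add sin_add)

lemma rot2_0: "rot2 0 = mat 1"
  by (simp add: rot2_def vec_eq_iff forall_2 mat_def)

lemma refl_s_eq: "refl_s = refl2 0"
  by (simp add: refl2_def refl_s_def vec_eq_iff forall_2)

lemma cvec_eq_iff: "(v::cvec) = w \<longleftrightarrow> v $ 1 = w $ 1 \<and> v $ 2 = w $ 2"
  by (simp add: vec_eq_iff forall_2)

lemma mem_form_ker: "v \<in> form_ker a \<longleftrightarrow> a $ 1 * v $ 1 + a $ 2 * v $ 2 = 0"
  by (simp add: form_ker_def sum_2)

lemma form_ker_ne_UNIV: "a \<noteq> 0 \<Longrightarrow> form_ker a \<noteq> UNIV"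
proof
  assume "a \<noteq> 0" "form_ker a = UNIV"
  then have "axis 1 1 \<in> form_ker a" "axis 2 1 \<in> form_ker a" by auto
  then have "a $ 1 = 0" "a $ 2 = 0" by (simp_all add: mem_form_ker axis_def)
  with \<open>a \<noteq> 0\<close> show False by (simp add: cvec_eq_iff)
qed

lemma form_ker_nonzero: "a \<noteq> 0 \<Longrightarrow> \<exists>v. v \<noteq> 0 \<and> v \<in> form_ker a"
proof -
  assume "a \<noteq> 0"
  define v :: cvec where "v = vector [a $ 2, - a $ 1]"
  have "v \<noteq> 0" using \<open>a \<noteq> 0\<close> by (auto simp: v_def cvec_eq_iff)
  moreover have "v \<in> form_ker a" by (simp add: v_def mem_form_ker mult.commute)
  ultimately show ?thesis by blast
qed

text \<open>With \<open>c = cos (a/2)\<close>, \<open>s = sin (a/2)\<close>, the fixed-point equations of \<open>refl2 a\<close>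
  become \<open>s (s x - c y) = 0\<close> and \<open>c (s x - c y) = 0\<close>.\<close>
lemma fixspace_refl2:
  "fixspace (refl2 a) = form_ker (vector [complex_of_real (sin (a/2)), - complex_of_real (cos (a/2))])"
proof (rule set_eqI)
  fix v :: cvec
  define c where "c = complex_of_real (cos (a/2))"
  define s where "s = complex_of_real (sin (a/2))"
  define d where "d = s * v $ 1 - c * v $ 2"
  have cs: "c * c + s * s = 1"
    unfolding c_def s_def by (simp flip: of_real_mult of_real_add add: sin_cos_squared_add3)
  have ca: "complex_of_real (cos a) = c * c - s * s" and sa: "complex_of_real (sin a) = 2 * s * c"
    using cos_double[of "a/2"] sin_double[of "a/2"] by (simp_all add: c_def s_def power2_eq_square)
  have r1: "(refl2 a *v v) $ 1 = (c * c - s * s) * v $ 1 + 2 * s * c * v $ 2"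
    and r2: "(refl2 a *v v) $ 2 = 2 * s * c * v $ 1 - (c * c - s * s) * v $ 2"
    by (simp_all add: refl2_def matrix_vector_mult_def sum_2 ca sa)
      (simp add: algebra_simps)
  have "(refl2 a *v v) $ 1 - v $ 1 = - 2 * s * d"
  proof -
    have "(c * c - s * s) * v $ 1 + 2 * s * c * v $ 2 - (c * c + s * s) * v $ 1 = - 2 * s * d"
      by (simp add: d_def algebra_simps)
    then show ?thesis by (simp only: cs r1 mult_1)
  qed
  moreover have "(refl2 a *v v) $ 2 - v $ 2 = 2 * c * d"
  proof -
    have "2 * s * c * v $ 1 - (c * c - s * s) * v $ 2 - (c * c + s * s) * v $ 2 = 2 * c * d"
      by (simp add: d_def algebra_simps)
    then show ?thesis by (simp only: cs r2 mult_1)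
  qed
  ultimately have "v \<in> fixspace (refl2 a) \<longleftrightarrow> s * d = 0 \<and> c * d = 0"
    unfolding fixspace_def mem_Collect_eq cvec_eq_iff
    by (metis (no_types, lifting) eq_iff_diff_eq_0 mult_eq_0_iff neg_0_equal_iff_equal zero_neq_numeral mult.assoc)
  also have "\<dots> \<longleftrightarrow> d = 0"
    using cs by auto
  finally show "v \<in> fixspace (refl2 a) \<longleftrightarrow> v \<in> form_ker (vector [s, - c])"
    by (simp add: mem_form_ker d_def)
qed

lemma is_reflection_refl2: "is_reflection (refl2 a)"
proof -
  let ?nu = "vector [complex_of_real (sin (a/2)), - complex_of_real (cos (a/2))] :: cvec"
  have "sin (a/2) \<noteq> 0 \<or> cos (a/2) \<noteq> 0"
    using sin_cos_squared_add[of "a/2"] by (auto simp: power2_eq_square)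
  then have "?nu \<noteq> 0"
    by (auto simp: cvec_eq_iff)
  then show ?thesis
    unfolding is_reflection_def fixspace_refl2 by blast
qed

lemma rot2_fixing_nonzero_eq_1:
  assumes fixed: "rot2 a *v v = v" and "v \<noteq> 0"
  shows "rot2 a = mat 1"
proof -
  define c where "c = complex_of_real (cos a)"
  define s where "s = complex_of_real (sin a)"
  have e1: "(c - 1) * v $ 1 - s * v $ 2 = 0" and e2: "s * v $ 1 + (c - 1) * v $ 2 = 0"
    using fixed by (simp_all add: cvec_eq_iff rot2_def matrix_vector_mult_def sum_2 c_def s_def
        algebra_simps)
  have "((c - 1) * (c - 1) + s * s) * v $ 1 = (c - 1) * ((c - 1) * v $ 1 - s * v $ 2) + s * (s * v $ 1 + (c - 1) * v $ 2)"
    and "((c - 1) * (c - 1) + s * s) * v $ 2 = (c - 1) * (s * v $ 1 + (c - 1) * v $ 2) - s * ((c - 1) * v $ 1 - s * v $ 2)"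
    by (simp_all add: algebra_simps)
  then have "((c - 1) * (c - 1) + s * s) * v $ 1 = 0" "((c - 1) * (c - 1) + s * s) * v $ 2 = 0"
    using e1 e2 by simp_all
  then have "(c - 1) * (c - 1) + s * s = 0"
    using \<open>v \<noteq> 0\<close> by (auto simp: cvec_eq_iff)
  then have "complex_of_real ((cos a - 1) * (cos a - 1) + sin a * sin a) = 0"
    by (simp add: c_def s_def)
  then have "cos a = 1" "sin a = 0"
    by (simp_all only: of_real_eq_0_iff sum_squares_eq_zero_iff) simp_all
  then show ?thesis
    by (simp add: rot2_def mat_def vec_eq_iff forall_2)
qed

text \<open>The fixed space of a reflection is a line, whereas a rotation fixes either no line
  or the whole plane.\<close>
lemma not_is_reflection_rot2: "\<not> is_reflection (rot2 a)"
proof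
  assume "is_reflection (rot2 a)"
  then obtain nu where "nu \<noteq> 0" and fixed: "fixspace (rot2 a) = form_ker nu"
    unfolding is_reflection_def by blast
  then obtain v where "v \<noteq> 0" "v \<in> fixspace (rot2 a)"
    using form_ker_nonzero by blast
  then have "rot2 a = mat 1"
    by (simp add: fixspace_def rot2_fixing_nonzero_eq_1)
  then have "form_ker nu = UNIV"
    by (simp flip: fixed add: fixspace_def)
  with \<open>nu \<noteq> 0\<close> show False
    using form_ker_ne_UNIV by blast
qed

lemma rot2_neg_mult_rot2: "rot2 (- a) ** rot2 a = mat 1"
  by (simp add: rot2_mult_rot2 rot2_0)

lemma refl2_mult_refl2_self: "refl2 a ** refl2 a = mat 1"
  by (simp add: refl2_mult_refl2 rot2_0)

lemma rot2_conj_refl2: "rot2 a ** refl2 b ** rot2 (- a) = refl2 (2 * a + b)"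
  by (simp add: rot2_mult_refl2 refl2_mult_rot2)

lemma refl2_conj_refl2: "refl2 a ** refl2 b ** refl2 a = refl2 (2 * a - b)"
  by (simp add: refl2_mult_refl2 rot2_mult_refl2)

definition cox_angle :: "nat \<Rightarrow> int \<Rightarrow> real" where
  "cox_angle m k = 2 * pi * of_int k / real m"

lemma refl_t_eq_cox_angle: "refl_t m = refl2 (cox_angle m 1)"
  by (simp add: refl2_def refl_t_def cox_angle_def vec_eq_iff forall_2)

lemma cox_angle_uminus: "cox_angle m (- k) = - cox_angle m k"
  by (simp add: cox_angle_def)

lemma cox_angle_add: "cox_angle m (k + l) = cox_angle m k + cox_angle m l"
  by (simp add: cox_angle_def add_divide_distrib distrib_left)

lemma cox_angle_mult: "cox_angle m (l * k) = of_int l * cox_angle m k"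
  by (simp add: cox_angle_def)

lemma cox_angle_diff: "cox_angle m (k - l) = cox_angle m k - cox_angle m l"
  by (simp add: cox_angle_def diff_divide_distrib right_diff_distrib)

lemma rot2_in_coxW: "rot2 (cox_angle m k) \<in> coxW m"
proof (induction k rule: int_induct[where k = 0])
  case base
  show ?case by (simp add: cox_angle_def rot2_0 coxW.one)
next
  case (step1 i)
  have "rot2 (cox_angle m (i + 1)) = refl_t m ** (refl_s ** rot2 (cox_angle m i))"
    by (simp add: refl_t_eq_cox_angle refl_s_eq refl2_mult_rot2 refl2_mult_refl2
        cox_angle_add add.commute)
  then show ?case using step1 by (simp add: coxW.S coxW.T)
next
  case (step2 i)
  have "rot2 (cox_angle m (i - 1)) = refl_s ** (refl_t m ** rot2 (cox_angle m i))"
    by (simp add: refl_t_eq_cox_angle refl_s_eq refl2_mult_rot2 refl2_mult_refl2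
        cox_angle_diff)
  then show ?case using step2 by (simp add: coxW.S coxW.T)
qed

lemma refl2_in_coxW: "refl2 (cox_angle m k) \<in> coxW m"
proof -
  have "refl2 (cox_angle m k) = refl_s ** rot2 (cox_angle m (- k))"
    by (simp add: refl_s_eq refl2_mult_rot2 cox_angle_uminus)
  then show ?thesis using coxW.S rot2_in_coxW by metis
qed

lemma coxW_eq:
  "coxW m = range (\<lambda>k. rot2 (cox_angle m k)) \<union> range (\<lambda>k. refl2 (cox_angle m k))"
proof
  show "coxW m \<subseteq> range (\<lambda>k. rot2 (cox_angle m k)) \<union> range (\<lambda>k. refl2 (cox_angle m k))"
  proof
    fix w assume "w \<in> coxW m"
    then show "w \<in> range (\<lambda>k. rot2 (cox_angle m k)) \<union> range (\<lambda>k. refl2 (cox_angle m k))"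
    proof (induction rule: coxW.induct)
      case one
      have "mat 1 = rot2 (cox_angle m 0)" by (simp add: cox_angle_def rot2_0)
      then show ?case by blast
    next
      case (S w)
      then obtain k where "w = rot2 (cox_angle m k) \<or> w = refl2 (cox_angle m k)" by blast
      then have "refl_s ** w = refl2 (cox_angle m (- k)) \<or> refl_s ** w = rot2 (cox_angle m (- k))"
        by (auto simp: refl_s_eq refl2_mult_rot2 refl2_mult_refl2 cox_angle_uminus)
      then show ?case by blast
    next
      case (T w)
      then obtain k where "w = rot2 (cox_angle m k) \<or> w = refl2 (cox_angle m k)" by blast
      then have "refl_t m ** w = refl2 (cox_angle m (1 - k)) \<or> refl_t m ** w = rot2 (cox_angle m (1 - k))"
        by (auto simp: refl_t_eq_cox_angle refl2_mult_rot2 refl2_mult_refl2 cox_angle_diff)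
      then show ?case by blast
    qed
  qed
qed (auto intro: rot2_in_coxW refl2_in_coxW)

lemma reflections_eq: "reflections m = range (\<lambda>k. refl2 (cox_angle m k))"
  by (auto simp: reflections_def coxW_eq is_reflection_refl2 not_is_reflection_rot2)

text \<open>Consecutive reflections \<open>refl2 (k\<theta>)\<close>, \<open>refl2 ((k+1)\<theta>)\<close> form a conjugate of the
  pair \<open>(s, t)\<close>: by the rotation through \<open>k\<theta>/2\<close> if \<open>k\<close> is even, and by the reflection
  \<open>refl2 ((k+1)\<theta>/2)\<close>, with the order of the pair reversed, if \<open>k\<close> is odd.\<close>
lemma consecutive_reflections_conjugate:
  obtains w w' where "w \<in> coxW m" "w' \<in> coxW m" "w' ** w = mat 1"
    "(w' ** refl_s ** w, w' ** refl_t m ** w) =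
        (refl2 (cox_angle m k), refl2 (cox_angle m (k + 1)))
     \<or> (w' ** refl_s ** w, w' ** refl_t m ** w) =
        (refl2 (cox_angle m (k + 1)), refl2 (cox_angle m k))"
proof (cases "even k")
  case True
  then obtain i where k: "k = 2 * i" by (auto elim: evenE)
  let ?w = "rot2 (- cox_angle m i)" and ?w' = "rot2 (cox_angle m i)"
  have "?w' ** refl_s ** ?w = refl2 (cox_angle m k)"
    and "?w' ** refl_t m ** ?w = refl2 (cox_angle m (k + 1))"
    by (simp_all only: refl_s_eq refl_t_eq_cox_angle rot2_conj_refl2)
      (simp_all add: k cox_angle_add cox_angle_mult)
  moreover have "?w' ** ?w = mat 1"
    using rot2_neg_mult_rot2[of "- cox_angle m i"] by simp
  ultimately show ?thesis
    using that rot2_in_coxW[of m i] rot2_in_coxW[of m "- i"] by (simp add: cox_angle_uminus)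
next
  case False
  then obtain j where k: "k + 1 = 2 * j" by (metis evenE even_plus_one_iff)
  then have k': "k = 2 * j - 1" by simp
  let ?w = "refl2 (cox_angle m j)"
  have "?w ** refl_s ** ?w = refl2 (cox_angle m (k + 1))"
    and "?w ** refl_t m ** ?w = refl2 (cox_angle m k)"
    by (simp_all only: refl_s_eq refl_t_eq_cox_angle refl2_conj_refl2)
      (simp_all add: k k' cox_angle_add cox_angle_diff cox_angle_mult)
  then show ?thesis
    using that refl2_in_coxW[of m j] refl2_mult_refl2_self by simp
qed

lemma cspan_base: "f \<in> S \<Longrightarrow> f \<in> cspan S"
  unfolding cspan_def by (intro CollectI exI[of _ "{f}"] exI[of _ "\<lambda>_. 1"]) auto

lemma cspan_add:
  assumes "f \<in> cspan S" "g \<in> cspan S"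
  shows "(\<lambda>x. f x + g x) \<in> cspan S"
proof -
  obtain F c where F: "finite F" "F \<subseteq> S" "f = (\<lambda>x. \<Sum>h\<in>F. c h * h x)"
    using assms(1) unfolding cspan_def by blast
  obtain G d where G: "finite G" "G \<subseteq> S" "g = (\<lambda>x. \<Sum>h\<in>G. d h * h x)"
    using assms(2) unfolding cspan_def by blast
  define e where "e h = (if h \<in> F then c h else 0) + (if h \<in> G then d h else 0)" for h
  have "(\<lambda>x. f x + g x) = (\<lambda>x. \<Sum>h\<in>F \<union> G. e h * h x)"
  proof
    fix x
    have "(\<Sum>h\<in>F \<union> G. e h * h x) =
      (\<Sum>h\<in>F \<union> G. if h \<in> F then c h * h x else 0) + (\<Sum>h\<in>F \<union> G. if h \<in> G then d h * h x else 0)"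
      by (simp add: e_def distrib_right flip: sum.distrib, intro sum.cong) simp_all
    also have "\<dots> = f x + g x"
      unfolding F(3) G(3) using F(1) G(1)
      by (intro arg_cong2[where f = "(+)"] sum.mono_neutral_cong_right) auto
    finally show "f x + g x = (\<Sum>h\<in>F \<union> G. e h * h x)" ..
  qed
  then show ?thesis
    unfolding cspan_def using F G by blast
qed

lemma cspan_scale:
  assumes "f \<in> cspan S"
  shows "(\<lambda>x. a * f x) \<in> cspan S"
proof -
  obtain F c where F: "finite F" "F \<subseteq> S" "f = (\<lambda>x. \<Sum>h\<in>F. c h * h x)"
    using assms unfolding cspan_def by blast
  then show ?thesis
    unfolding cspan_def
    by (intro CollectI exI[of _ F] exI[of _ "\<lambda>h. a * c h"]) (simp add: sum_distrib_left mult.assoc)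
qed

lemma cspan_diff:
  assumes "f \<in> cspan S" "g \<in> cspan S"
  shows "(\<lambda>x. f x - g x) \<in> cspan S"
  using cspan_add[OF assms(1) cspan_scale[OF assms(2), of "-1"]] by simp

lemma OS_gens_subset_OS_ideal: "OS_gens m \<subseteq> OS_ideal m"
proof
  fix r assume "r \<in> OS_gens m"
  moreover have "wmul [] r [] = r" by (simp add: wmul_def)
  ultimately show "r \<in> OS_ideal m"
    unfolding OS_ideal_def by (intro cspan_base CollectI exI[of _ "[]"] exI[of _ r]) simp
qed

lemma anticommutator_in_OS_ideal:
  "t \<in> reflections m \<Longrightarrow> t' \<in> reflections m \<Longrightarrow> (\<lambda>x. wd [t, t'] x + wd [t', t] x) \<in> OS_ideal m"
  using OS_gens_subset_OS_ideal unfolding OS_gens_def by blast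

lemma three_vectors_dependent:
  fixes a b c :: "'a::field ^ 2"
  shows "\<exists>x y z. (x \<noteq> 0 \<or> y \<noteq> 0 \<or> z \<noteq> 0) \<and> x *s a + y *s b + z *s c = 0"
proof -
  define det where "det u v = u $ 1 * v $ 2 - u $ 2 * v $ 1" for u v :: "'a ^ 2"
  have cramer: "det b c *s a + (- det a c) *s b + det a b *s c = 0"
    by (simp add: vec_eq_iff forall_2 det_def algebra_simps)
  show ?thesis
  proof (cases "det a b = 0")
    case False
    with cramer show ?thesis
      by (intro exI[of _ "det b c"] exI[of _ "- det a c"] exI[of _ "det a b"]) simp
  next
    case True
    consider "a $ 1 \<noteq> 0" | "a $ 2 \<noteq> 0" | "a = 0"
      by (auto simp: vec_eq_iff forall_2)
    then show ?thesis
    proof cases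
      case 1
      have "b $ 1 *s a + (- a $ 1) *s b + 0 *s c = 0"
        using True by (simp add: vec_eq_iff forall_2 det_def mult.commute)
      with 1 show ?thesis by (intro exI[of _ "b $ 1"] exI[of _ "- a $ 1"] exI[of _ 0]) simp
    next
      case 2
      have "b $ 2 *s a + (- a $ 2) *s b + 0 *s c = 0"
        using True by (simp add: vec_eq_iff forall_2 det_def mult.commute)
      with 2 show ?thesis by (intro exI[of _ "b $ 2"] exI[of _ "- a $ 2"] exI[of _ 0]) simp
    next
      case 3
      then show ?thesis by (intro exI[of _ 1] exI[of _ 0] exI[of _ 0]) simp
    qed
  qed
qed

lemma hyps_dependent_three:
  assumes "a0 \<noteq> 0" "a1 \<noteq> 0" "a2 \<noteq> 0"
  shows "hyps_dependent [form_ker a0, form_ker a1, form_ker a2]"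
proof -
  obtain x y z where nz: "x \<noteq> 0 \<or> y \<noteq> 0 \<or> z \<noteq> 0" and comb: "x *s a0 + y *s a1 + z *s a2 = 0"
    using three_vectors_dependent by blast
  have all3: "(\<forall>i<3. P i) \<longleftrightarrow> P 0 \<and> P 1 \<and> P 2"
    and ex3: "(\<exists>i<3. P i) \<longleftrightarrow> P 0 \<or> P 1 \<or> P 2" for P :: "nat \<Rightarrow> bool"
    by (auto simp: numeral_3_eq_3 numeral_2_eq_2 less_Suc_eq)
  have sum3: "(\<Sum>i<3. h i) = h 0 + h 1 + h 2" for h :: "nat \<Rightarrow> cvec"
    by (simp add: numeral_3_eq_3 numeral_2_eq_2)
  have len: "length [form_ker a0, form_ker a1, form_ker a2] = 3"
    by simp
  show ?thesis
    unfolding hyps_dependent_def len all3 ex3 sum3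
    by (intro exI[of _ "(!) [a0, a1, a2]"] exI[of _ "(!) [x, y, z]"]) (use assms nz comb in auto)
qed

lemma os_rel_three: "os_rel [a, b, c] = (\<lambda>x. wd [a, c] x - wd [b, c] x - wd [a, b] x)"
  by (simp add: os_rel_def numeral_3_eq_3)

lemma os_rel_three_in_OS_ideal:
  assumes "set [a, b, c] \<subseteq> reflections m"
  shows "os_rel [a, b, c] \<in> OS_ideal m"
proof -
  have "\<exists>\<nu>. \<nu> \<noteq> 0 \<and> fixspace t = form_ker \<nu>" if "t \<in> reflections m" for t
    using that unfolding reflections_def is_reflection_def by blast
  then have "hyps_dependent (map fixspace [a, b, c])"
    using assms hyps_dependent_three by (metis insert_subset list.set list.simps(8,9))
  then show ?thesis
    using assms OS_gens_subset_OS_ideal unfolding OS_gens_def by blast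
qed

lemma wd_swap_in_cspan:
  assumes "OS_ideal m \<subseteq> S" "a \<in> reflections m" "b \<in> reflections m" "wd [a, b] \<in> cspan S"
  shows "wd [b, a] \<in> cspan S"
proof -
  have "(\<lambda>x. wd [a, b] x + wd [b, a] x) \<in> cspan S"
    using assms anticommutator_in_OS_ideal cspan_base by blast
  from cspan_diff[OF this assms(4)] show ?thesis
    by simp
qed

lemma wd_trans_in_cspan:
  assumes "OS_ideal m \<subseteq> S" "set [a, b, c] \<subseteq> reflections m"
    and "wd [a, b] \<in> cspan S" "wd [b, c] \<in> cspan S"
  shows "wd [a, c] \<in> cspan S"
proof -
  have "os_rel [a, b, c] \<in> cspan S"
    using assms os_rel_three_in_OS_ideal cspan_base by blast
  from cspan_add[OF cspan_add[OF this assms(4)] assms(3)] show ?thesis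
    by (simp add: os_rel_three)
qed

lemma int_rel_of_consecutive:
  fixes R :: "int \<Rightarrow> int \<Rightarrow> bool"
  assumes consecutive: "\<And>k. R k (k + 1)"
    and sym: "\<And>i j. R i j \<Longrightarrow> R j i"
    and trans: "\<And>i j k. R i j \<Longrightarrow> R j k \<Longrightarrow> R i k"
  shows "R i j"
proof -
  have refl: "R k k" for k
    using consecutive sym trans by blast
  have up: "R i j" if "i \<le> j" for i j
    using that
  proof (induction j rule: int_ge_induct)
    case base
    show ?case by (rule refl)
  next
    case (step j)
    then show ?case using consecutive trans by blast
  qed
  show ?thesis
    using up[of i j] up[of j i] sym by fastforce
qed

lemma consecutive_reflections_in_cspan:
  assumes "{wd [w' ** refl_s ** w, w' ** refl_t m ** w] | w w'.
      w \<in> coxW m \<and> w' \<in> coxW m \<and> w' ** w = mat 1} \<subseteq> S"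
    and "OS_ideal m \<subseteq> S"
  shows "wd [refl2 (cox_angle m k), refl2 (cox_angle m (k + 1))] \<in> cspan S"
proof -
  obtain w w' where "w \<in> coxW m" "w' \<in> coxW m" "w' ** w = mat 1"
    and pair: "(w' ** refl_s ** w, w' ** refl_t m ** w) =
        (refl2 (cox_angle m k), refl2 (cox_angle m (k + 1)))
      \<or> (w' ** refl_s ** w, w' ** refl_t m ** w) =
        (refl2 (cox_angle m (k + 1)), refl2 (cox_angle m k))"
    by (rule consecutive_reflections_conjugate)
  then have "wd [w' ** refl_s ** w, w' ** refl_t m ** w] \<in> cspan S"
    using assms(1) by (intro cspan_base) blast
  with pair show ?thesis
    using wd_swap_in_cspan[OF assms(2)] by (auto simp: reflections_eq)
qed

lemma reflection_pairs_in_cspan: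
  assumes "OS_ideal m \<subseteq> S"
    and consecutive: "\<And>k. wd [refl2 (cox_angle m k), refl2 (cox_angle m (k + 1))] \<in> cspan S"
    and "t1 \<in> reflections m" "t2 \<in> reflections m"
  shows "wd [t1, t2] \<in> cspan S"
proof -
  let ?good = "\<lambda>i j. wd [refl2 (cox_angle m i), refl2 (cox_angle m j)] \<in> cspan S"
  have "?good j i" if "?good i j" for i j
    using wd_swap_in_cspan[OF assms(1) _ _ that] by (simp add: reflections_eq)
  moreover have "?good i k" if "?good i j" "?good j k" for i j k
    using wd_trans_in_cspan[OF assms(1) _ that] by (simp add: reflections_eq)
  ultimately have "?good i j" for i j
    using int_rel_of_consecutive[where R = ?good] consecutive by blast
  then show ?thesis
    using assms(3,4) by (auto simp: reflections_eq)
qed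

theorem lemma5p9:
  fixes m :: nat
  assumes "2 \<le> m"
  shows "\<forall>t1 \<in> reflections m. \<forall>t2 \<in> reflections m.
    wd [t1, t2] \<in> cspan ({wd [w' ** refl_s ** w, w' ** refl_t m ** w] | w w'.
        w \<in> coxW m \<and> w' \<in> coxW m \<and> w' ** w = mat 1} \<union> OS_ideal m)"
  using reflection_pairs_in_cspan[OF Un_upper2
      consecutive_reflections_in_cspan[OF Un_upper1 Un_upper2]] by blast

end
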